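(* Let $G=(V,E)$ be a finite graph, let $\lambda>0$, and let $(S_v : v\in V)$ be nonempty finite lists of colors. An $S$-coloring is a map $\sigma$ on $V$ with $\sigma(v)\in S_v$ for all $v$ and $\sigma(u)\neq\sigma(v)$ for all $uv\in E$; identify it with the set $\{(v,\sigma(v)):v\in V\}$. (1) If $|S_v|\ge(1+\lambda)d(v)$ for all $v\in V$, then there is a random $S$-coloring $\sigma$ of $G$ such that for every set $T=\{(u_1,\gamma_1),\dots,(u_k,\gamma_k)\}$ of vertex-color pairs with distinct $u_i$, $$\mathbb{P}(\sigma(u_1)=\gamma_1,\dots,\sigma(u_k)=\gamma_k)\le\prod_{i=1}^k\frac{1}{\lambda d(u_i)},$$ where a factor with $d(u_i)=0$ is interpreted as $+\infty$. (2) If $|S_v|\ge(1+\lambda)\Delta_G$ for all $v\in V$, then there is a random $S$-coloring $\sigma$ of $G$ which is $\frac{1}{\lambda\Delta_G}$-spread, i.e. for every set $T$ of vertex-color pairs, $\mathbb{P}(\sigma\supseteq T)\le(\lambda\Delta_G)^{-|T|}$.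
   Context: $d(v)$ is the degree of $v$ in $G$ and $\Delta_G$ the maximum degree of $G$. A random set $S$ is $p$-spread if $\mathbb{P}(S\supseteq T)\le p^{|T|}$ for all sets $T$. *)

theory Defs
  imports "HOL-Probability.Probability"
begin

definition fin_graph :: "'a set \<Rightarrow> ('a \<Rightarrow> 'a \<Rightarrow> bool) \<Rightarrow> bool" where
  "fin_graph V E \<longleftrightarrow> finite V \<and> (\<forall>u v. E u v \<longrightarrow> u \<in> V \<and> v \<in> V)
     \<and> (\<forall>u v. E u v \<longrightarrow> E v u) \<and> (\<forall>v. \<not> E v v)"

definition deg :: "'a set \<Rightarrow> ('a \<Rightarrow> 'a \<Rightarrow> bool) \<Rightarrow> 'a \<Rightarrow> nat" where
  "deg V E v = card {u \<in> V. E v u}"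

definition maxdeg :: "'a set \<Rightarrow> ('a \<Rightarrow> 'a \<Rightarrow> bool) \<Rightarrow> nat" where
  "maxdeg V E = Max (insert 0 (deg V E ` V))"

definition S_coloring :: "'a set \<Rightarrow> ('a \<Rightarrow> 'a \<Rightarrow> bool) \<Rightarrow> ('a \<Rightarrow> 'c set) \<Rightarrow> ('a \<Rightarrow> 'c) \<Rightarrow> bool" where
  "S_coloring V E S \<sigma> \<longleftrightarrow> (\<forall>v\<in>V. \<sigma> v \<in> S v) \<and> (\<forall>u\<in>V. \<forall>v\<in>V. E u v \<longrightarrow> \<sigma> u \<noteq> \<sigma> v)"

definition coloring_graph :: "'a set \<Rightarrow> ('a \<Rightarrow> 'c) \<Rightarrow> ('a \<times> 'c) set" where
  "coloring_graph V \<sigma> = {(v, \<sigma> v) | v. v \<in> V}"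

end

theory Submission
  imports Defs
begin

text \<open>Colour the vertices one at a time, each with a uniformly random colour from its
  list that avoids the colours already given to its neighbours; at least
  \<open>|S v| - d(v)\<close> colours remain available. Whatever happened before, a vertex
  therefore receives a prescribed colour with probability at most \<open>1 / (|S v| - d(v))\<close>,
  so the probability of prescribing all pairs of \<open>T\<close> is at most the product of these
  factors, and \<open>|S v| - d(v)\<close> is at least \<open>\<lambda> d(v)\<close>, resp. \<open>\<lambda> \<Delta>\<close>.\<close>

definition pinned :: "('a \<times> 'c) set \<Rightarrow> ('a \<Rightarrow> 'c) set" where
  "pinned T = {\<sigma>. \<forall>(u, \<gamma>)\<in>T. \<sigma> u = \<gamma>}"

lemma pinned_fun_upd_other:
  assumes "x \<notin> fst ` T"
  shows "\<sigma>(x := c) \<in> pinned T \<longleftrightarrow> \<sigma> \<in> pinned T"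
  using assms by (force simp: pinned_def)

lemma pinned_insert:
  "pinned (insert (u, \<gamma>) T) = {\<sigma>. \<sigma> u = \<gamma>} \<inter> pinned T"
  by (auto simp: pinned_def)

lemma pinned_fun_upd:
  assumes "(x, \<gamma>) \<in> T" "inj_on fst T"
  shows "\<sigma>(x := c) \<in> pinned T \<longleftrightarrow> c = \<gamma> \<and> \<sigma> \<in> pinned (T - {(x, \<gamma>)})"
proof -
  have "x \<notin> fst ` (T - {(x, \<gamma>)})"
  proof
    assume "x \<in> fst ` (T - {(x, \<gamma>)})"
    then obtain b where "(x, b) \<in> T" "b \<noteq> \<gamma>"
      by force
    with inj_onD[OF assms(2) _ _ assms(1)] show False
      by fastforce
  qed
  moreover have "pinned T = {\<sigma>. \<sigma> x = \<gamma>} \<inter> pinned (T - {(x, \<gamma>)})"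
    using pinned_insert[of x \<gamma> "T - {(x, \<gamma>)}"] by (simp add: insert_absorb assms(1))
  ultimately show ?thesis
    by (simp add: pinned_fun_upd_other)
qed

lemma subset_coloring_graph_iff:
  "T \<subseteq> coloring_graph V \<sigma> \<longleftrightarrow> fst ` T \<subseteq> V \<and> \<sigma> \<in> pinned T"
  by (fastforce simp: coloring_graph_def pinned_def)

lemma inj_on_fst_if_pinned:
  assumes "\<sigma> \<in> pinned T"
  shows "inj_on fst T"
proof (rule inj_onI)
  fix a b assume "a \<in> T" "b \<in> T" "fst a = fst b"
  moreover have "snd a = \<sigma> (fst a)" "snd b = \<sigma> (fst b)"
    using assms \<open>a \<in> T\<close> \<open>b \<in> T\<close> by (auto simp: pinned_def)
  ultimately show "a = b"
    by (simp add: prod_eq_iff)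
qed

definition extend_uniform ::
    "('a \<Rightarrow> 'c) pmf \<Rightarrow> 'a \<Rightarrow> (('a \<Rightarrow> 'c) \<Rightarrow> 'c set) \<Rightarrow> ('a \<Rightarrow> 'c) pmf" where
  "extend_uniform p x A = p \<bind> (\<lambda>\<sigma>. map_pmf (\<lambda>c. \<sigma>(x := c)) (pmf_of_set (A \<sigma>)))"

lemma set_pmf_extend_uniform:
  assumes "\<And>\<sigma>. finite (A \<sigma>) \<and> A \<sigma> \<noteq> {}"
  shows "set_pmf (extend_uniform p x A) = {\<sigma>(x := c) |\<sigma> c. \<sigma> \<in> set_pmf p \<and> c \<in> A \<sigma>}"
  using assms by (auto simp: extend_uniform_def)

lemma emeasure_extend_uniform:
  "emeasure (extend_uniform p x A) X
    = (\<integral>\<^sup>+\<sigma>. emeasure (pmf_of_set (A \<sigma>)) {c. \<sigma>(x := c) \<in> X} \<partial>p)"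
  by (simp add: extend_uniform_def vimage_def)

lemma prob_extend_uniform_other:
  assumes "x \<notin> fst ` T"
  shows "measure_pmf.prob (extend_uniform p x A) (pinned T) = measure_pmf.prob p (pinned T)"
proof -
  have "emeasure (pmf_of_set (A \<sigma>)) {c. \<sigma>(x := c) \<in> pinned T} = indicator (pinned T) \<sigma>" for \<sigma>
    by (simp add: pinned_fun_upd_other[OF assms] measure_pmf.emeasure_space_1)
  then have "emeasure (extend_uniform p x A) (pinned T) = emeasure p (pinned T)"
    by (simp add: emeasure_extend_uniform)
  then show ?thesis
    by (simp add: measure_pmf.emeasure_eq_measure)
qed

lemma prob_extend_uniform_pinned:
  fixes m :: real
  assumes "(x, \<gamma>) \<in> T" "inj_on fst T" "m > 0"
    and choices: "\<And>\<sigma>. finite (A \<sigma>) \<and> m \<le> card (A \<sigma>)"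
  shows "measure_pmf.prob (extend_uniform p x A) (pinned T)
    \<le> measure_pmf.prob p (pinned (T - {(x, \<gamma>)})) / m"
proof -
  let ?T' = "T - {(x, \<gamma>)}"
  have "measure_pmf.prob (pmf_of_set (A \<sigma>)) {\<gamma>} \<le> 1 / m" for \<sigma>
  proof -
    have "card (A \<sigma>) > 0"
      using choices[of \<sigma>] \<open>m > 0\<close> by linarith
    then have "measure_pmf.prob (pmf_of_set (A \<sigma>)) {\<gamma>} = card (A \<sigma> \<inter> {\<gamma>}) / card (A \<sigma>)"
      by (simp add: card_gt_0_iff measure_pmf_of_set)
    also have "\<dots> \<le> 1 / card (A \<sigma>)"
      by (rule divide_right_mono) (auto simp: card_le_Suc0_iff_eq)
    also have "\<dots> \<le> 1 / m"
      using choices \<open>m > 0\<close> \<open>card (A \<sigma>) > 0\<close> by (intro divide_left_mono) auto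
    finally show ?thesis .
  qed
  then have "emeasure (pmf_of_set (A \<sigma>)) {c. \<sigma>(x := c) \<in> pinned T}
      \<le> ennreal (1 / m) * indicator (pinned ?T') \<sigma>" for \<sigma>
    by (cases "\<sigma> \<in> pinned ?T'")
      (simp_all add: pinned_fun_upd[OF assms(1,2)] measure_pmf.emeasure_eq_measure ennreal_leI)
  then have "emeasure (extend_uniform p x A) (pinned T)
      \<le> (\<integral>\<^sup>+\<sigma>. ennreal (1 / m) * indicator (pinned ?T') \<sigma> \<partial>p)"
    unfolding emeasure_extend_uniform by (rule nn_integral_mono)
  also have "\<dots> = ennreal (measure_pmf.prob p (pinned ?T') / m)"
    using \<open>m > 0\<close> by (simp add: nn_integral_cmult measure_pmf.emeasure_eq_measure flip: ennreal_mult)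
  finally show ?thesis
    using \<open>m > 0\<close> by (simp add: measure_pmf.emeasure_eq_measure)
qed

lemma deg_mono:
  assumes "finite V" "F \<subseteq> V"
  shows "deg F E v \<le> deg V E v"
  unfolding deg_def using assms by (intro card_mono) auto

lemma S_coloring_fun_upd:
  assumes "S_coloring F E S \<sigma>" "symp E" "irreflp E"
    and "c \<in> S x - \<sigma> ` {w \<in> F. E x w}"
  shows "S_coloring (insert x F) E S (\<sigma>(x := c))"
  using assms unfolding S_coloring_def symp_def irreflp_def by auto

lemma greedy_random_list_coloring:
  fixes S :: "'a \<Rightarrow> 'c set"
  assumes "finite V" "symp E" "irreflp E"
    and room: "\<And>v. v \<in> V \<Longrightarrow> finite (S v) \<and> deg V E v < card (S v)"
  shows "\<exists>p. (\<forall>\<sigma>\<in>set_pmf p. S_coloring V E S \<sigma>) \<and>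
    (\<forall>T. finite T \<and> fst ` T \<subseteq> V \<and> inj_on fst T \<longrightarrow>
      measure_pmf.prob p (pinned T) \<le> (\<Prod>(u, \<gamma>)\<in>T. 1 / (real (card (S u)) - real (deg V E u))))"
proof -
  let ?slack = "\<lambda>u. real (card (S u)) - real (deg V E u)"
  have "\<exists>p. (\<forall>\<sigma>\<in>set_pmf p. S_coloring F E S \<sigma>) \<and>
    (\<forall>T. finite T \<and> fst ` T \<subseteq> F \<and> inj_on fst T \<longrightarrow>
      measure_pmf.prob p (pinned T) \<le> (\<Prod>(u, \<gamma>)\<in>T. 1 / ?slack u))"
    if "F \<subseteq> V" for F
    using finite_subset[OF that \<open>finite V\<close>] that
  proof (induction F rule: finite_induct)
    case empty
    show ?case
      by (intro exI[of _ "return_pmf undefined"]) (auto simp: S_coloring_def pinned_def)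
  next
    case (insert x F)
    have "F \<subseteq> V" "x \<in> V"
      using insert.prems by auto
    from insert.IH[OF \<open>F \<subseteq> V\<close>]
    obtain p where p_colors: "\<forall>\<sigma>\<in>set_pmf p. S_coloring F E S \<sigma>"
      and p_bound: "\<forall>T. finite T \<and> fst ` T \<subseteq> F \<and> inj_on fst T \<longrightarrow>
        measure_pmf.prob p (pinned T) \<le> (\<Prod>(u, \<gamma>)\<in>T. 1 / ?slack u)"
      by blast
    define A where "A = (\<lambda>\<sigma>. S x - \<sigma> ` {w \<in> F. E x w})"
    have slack_pos: "?slack x > 0"
      using room[OF \<open>x \<in> V\<close>] by simp
    have choices: "finite (A \<sigma>) \<and> ?slack x \<le> card (A \<sigma>)" for \<sigma>
    proof -
      have "card (\<sigma> ` {w \<in> F. E x w}) \<le> deg V E x"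
        using card_image_le[of "{w \<in> F. E x w}" \<sigma>] deg_mono[OF \<open>finite V\<close> \<open>F \<subseteq> V\<close>, of E x]
          \<open>finite F\<close> by (simp add: deg_def)
      then have "card (S x) - deg V E x \<le> card (S x) - card (\<sigma> ` {w \<in> F. E x w})"
        by (rule diff_le_mono2)
      also have "\<dots> \<le> card (A \<sigma>)"
        unfolding A_def using \<open>finite F\<close> by (intro diff_card_le_card_Diff) auto
      finally have "card (S x) - deg V E x \<le> card (A \<sigma>)" .
      then have "?slack x \<le> card (A \<sigma>)"
        using room[OF \<open>x \<in> V\<close>] by linarith
      moreover have "finite (A \<sigma>)"
        using room[OF \<open>x \<in> V\<close>] by (simp add: A_def)
      ultimately show ?thesis
        by blast
    qed
    show ?case
    proof (intro exI[of _ "extend_uniform p x A"] conjI ballI allI impI)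
      have "A \<sigma> \<noteq> {}" for \<sigma>
        using choices[of \<sigma>] slack_pos by auto
      then have set_q: "set_pmf (extend_uniform p x A) = {\<sigma>(x := c) |\<sigma> c. \<sigma> \<in> set_pmf p \<and> c \<in> A \<sigma>}"
        using choices by (intro set_pmf_extend_uniform) blast
      fix \<tau> assume "\<tau> \<in> set_pmf (extend_uniform p x A)"
      then obtain \<sigma> c where "\<sigma> \<in> set_pmf p" "c \<in> A \<sigma>" "\<tau> = \<sigma>(x := c)"
        unfolding set_q by blast
      then show "S_coloring (insert x F) E S \<tau>"
        using p_colors by (simp add: S_coloring_fun_upd assms(2,3) A_def)
    next
      fix T :: "('a \<times> 'c) set"
      assume T: "finite T \<and> fst ` T \<subseteq> insert x F \<and> inj_on fst T"
      show "measure_pmf.prob (extend_uniform p x A) (pinned T) \<le> (\<Prod>(u, \<gamma>)\<in>T. 1 / ?slack u)"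
      proof (cases "x \<in> fst ` T")
        case False
        then have "fst ` T \<subseteq> F"
          using T by blast
        then show ?thesis
          using T p_bound False by (simp add: prob_extend_uniform_other)
      next
        case True
        then obtain \<gamma> where "(x, \<gamma>) \<in> T"
          by force
        let ?T' = "T - {(x, \<gamma>)}"
        have "fst ` ?T' \<subseteq> F"
          using T \<open>(x, \<gamma>) \<in> T\<close> by (force simp: inj_on_def)
        then have "measure_pmf.prob p (pinned ?T') \<le> (\<Prod>(u, \<gamma>)\<in>?T'. 1 / ?slack u)"
          using p_bound T by (simp add: inj_on_diff)
        have "measure_pmf.prob (extend_uniform p x A) (pinned T)
            \<le> measure_pmf.prob p (pinned ?T') / ?slack x"
          using \<open>(x, \<gamma>) \<in> T\<close> T slack_pos choices by (intro prob_extend_uniform_pinned) auto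
        also have "\<dots> \<le> (\<Prod>(u, \<gamma>)\<in>?T'. 1 / ?slack u) / ?slack x"
          using \<open>measure_pmf.prob p (pinned ?T') \<le> _\<close> slack_pos by (simp add: divide_right_mono)
        also have "\<dots> = (\<Prod>(u, \<gamma>)\<in>T. 1 / ?slack u)"
          using T \<open>(x, \<gamma>) \<in> T\<close> by (simp add: prod.remove)
        finally show ?thesis .
      qed
    qed
  qed
  from this[OF order_refl] show ?thesis .
qed

lemma deg_le_maxdeg:
  assumes "finite V" "v \<in> V"
  shows "deg V E v \<le> maxdeg V E"
  unfolding maxdeg_def using assms by (intro Max_ge) auto

lemma fin_graphD:
  assumes "fin_graph V E"
  shows "finite V" "symp E" "irreflp E"
  using assms unfolding fin_graph_def symp_def irreflp_def by auto

lemma scaled_bound_gap: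
  fixes lam :: real and k d n :: nat
  assumes "lam > 0" "n > 0" "k \<le> d" "(1 + lam) * d \<le> n"
  shows "k < n" "lam * d \<le> real n - real k"
proof -
  have "real k \<le> real d" "lam * d \<ge> 0"
    using assms by auto
  then show "lam * d \<le> real n - real k"
    using assms(4) by (simp add: algebra_simps)
  show "k < n"
  proof (cases "d = 0")
    case False
    then have "real d < (1 + lam) * d"
      using \<open>lam > 0\<close> by simp
    then show ?thesis
      using assms(3,4) by linarith
  qed (use assms in simp)
qed

lemma prod_pairs_reciprocal_mono:
  fixes a b :: "'a \<Rightarrow> real"
  assumes "\<And>u. u \<in> fst ` T \<Longrightarrow> 0 < a u \<and> a u \<le> b u"
  shows "(\<Prod>(u, \<gamma>)\<in>T. 1 / b u) \<le> (\<Prod>(u, \<gamma>)\<in>T. 1 / a u)"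
  using assms by (intro prod_mono) (force intro: frac_le)

lemma random_list_coloring_deg:
  fixes lam :: real
  assumes G: "fin_graph V E" and "lam > 0"
    and S_fin: "\<forall>v\<in>V. finite (S v) \<and> S v \<noteq> {}"
    and large: "\<forall>v\<in>V. real (card (S v)) \<ge> (1 + lam) * real (deg V E v)"
  shows "\<exists>p. (\<forall>\<sigma>\<in>set_pmf p. S_coloring V E S \<sigma>) \<and>
    (\<forall>T. finite T \<and> fst ` T \<subseteq> V \<and> inj_on fst T \<and> (\<forall>(u, \<gamma>)\<in>T. deg V E u > 0) \<longrightarrow>
      measure_pmf.prob p (pinned T) \<le> (\<Prod>(u, \<gamma>)\<in>T. 1 / (lam * real (deg V E u))))"
proof -
  have room: "finite (S v) \<and> deg V E v < card (S v)"
    and gap: "lam * deg V E v \<le> real (card (S v)) - real (deg V E v)" if "v \<in> V" for v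
    using scaled_bound_gap[OF \<open>lam > 0\<close> _ order_refl] large S_fin that
    by (auto simp: card_gt_0_iff)
  from greedy_random_list_coloring[OF fin_graphD[OF G] room]
  obtain p where colors: "\<forall>\<sigma>\<in>set_pmf p. S_coloring V E S \<sigma>"
    and bound: "\<forall>T. finite T \<and> fst ` T \<subseteq> V \<and> inj_on fst T \<longrightarrow> measure_pmf.prob p (pinned T)
      \<le> (\<Prod>(u, \<gamma>)\<in>T. 1 / (real (card (S u)) - real (deg V E u)))"
    by blast
  have "measure_pmf.prob p (pinned T) \<le> (\<Prod>(u, \<gamma>)\<in>T. 1 / (lam * real (deg V E u)))"
    if T: "finite T \<and> fst ` T \<subseteq> V \<and> inj_on fst T \<and> (\<forall>(u, \<gamma>)\<in>T. deg V E u > 0)" for T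
  proof -
    have "measure_pmf.prob p (pinned T) \<le> (\<Prod>(u, \<gamma>)\<in>T. 1 / (real (card (S u)) - real (deg V E u)))"
      using bound T by blast
    also have "\<dots> \<le> (\<Prod>(u, \<gamma>)\<in>T. 1 / (lam * real (deg V E u)))"
      using T gap \<open>lam > 0\<close> by (intro prod_pairs_reciprocal_mono) auto
    finally show ?thesis .
  qed
  with colors show ?thesis
    by blast
qed

lemma random_list_coloring_spread:
  fixes lam :: real
  assumes G: "fin_graph V E" and "lam > 0"
    and S_fin: "\<forall>v\<in>V. finite (S v) \<and> S v \<noteq> {}"
    and large: "\<forall>v\<in>V. real (card (S v)) \<ge> (1 + lam) * real (maxdeg V E)"
  shows "\<exists>p. (\<forall>\<sigma>\<in>set_pmf p. S_coloring V E S \<sigma>) \<and>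
    (maxdeg V E > 0 \<longrightarrow> (\<forall>T. measure_pmf.prob p {\<sigma>. T \<subseteq> coloring_graph V \<sigma>}
      \<le> (1 / (lam * real (maxdeg V E))) ^ card T))"
proof -
  note V = fin_graphD[OF G]
  have room: "finite (S v) \<and> deg V E v < card (S v)"
    and gap: "lam * maxdeg V E \<le> real (card (S v)) - real (deg V E v)" if "v \<in> V" for v
    using scaled_bound_gap[OF \<open>lam > 0\<close> _ deg_le_maxdeg[OF V(1) that]] large S_fin that
    by (auto simp: card_gt_0_iff)
  from greedy_random_list_coloring[OF V room]
  obtain p where colors: "\<forall>\<sigma>\<in>set_pmf p. S_coloring V E S \<sigma>"
    and bound: "\<forall>T. finite T \<and> fst ` T \<subseteq> V \<and> inj_on fst T \<longrightarrow> measure_pmf.prob p (pinned T)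
      \<le> (\<Prod>(u, \<gamma>)\<in>T. 1 / (real (card (S u)) - real (deg V E u)))"
    by blast
  have "measure_pmf.prob p {\<sigma>. T \<subseteq> coloring_graph V \<sigma>} \<le> (1 / (lam * real (maxdeg V E))) ^ card T"
    if "maxdeg V E > 0" for T
  proof (cases "\<exists>\<sigma>. T \<subseteq> coloring_graph V \<sigma>")
    case True
    then have T: "fst ` T \<subseteq> V" "inj_on fst T"
      by (auto simp: subset_coloring_graph_iff intro: inj_on_fst_if_pinned)
    then have "finite T"
      using finite_imageD finite_subset V(1) by blast
    have "measure_pmf.prob p {\<sigma>. T \<subseteq> coloring_graph V \<sigma>} \<le> measure_pmf.prob p (pinned T)"
      by (intro measure_pmf.finite_measure_mono) (auto simp: subset_coloring_graph_iff)
    also have "\<dots> \<le> (\<Prod>(u, \<gamma>)\<in>T. 1 / (real (card (S u)) - real (deg V E u)))"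
      using bound T \<open>finite T\<close> by blast
    also have "\<dots> \<le> (\<Prod>(u, \<gamma>)\<in>T. 1 / (lam * real (maxdeg V E)))"
      using T gap \<open>lam > 0\<close> \<open>maxdeg V E > 0\<close> by (intro prod_pairs_reciprocal_mono) auto
    finally show ?thesis
      by (simp add: prod_constant)
  qed (use \<open>lam > 0\<close> in simp)
  with colors show ?thesis
    by blast
qed

theorem proposition4p1:
  fixes V :: "'a set" and E :: "'a \<Rightarrow> 'a \<Rightarrow> bool" and S :: "'a \<Rightarrow> 'c set"
    and lam :: real
  assumes G: "fin_graph V E"
    and lam_pos: "lam > 0"
    and S_fin: "\<forall>v\<in>V. finite (S v) \<and> S v \<noteq> {}"
  shows
    "((\<forall>v\<in>V. real (card (S v)) \<ge> (1 + lam) * real (deg V E v)) \<longrightarrow>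
       (\<exists>p :: ('a \<Rightarrow> 'c) pmf. (\<forall>\<sigma>\<in>set_pmf p. S_coloring V E S \<sigma>) \<and>
          (\<forall>T :: ('a \<times> 'c) set. finite T \<and> fst ` T \<subseteq> V \<and> inj_on fst T \<and>
               (\<forall>(u, \<gamma>)\<in>T. deg V E u > 0) \<longrightarrow>
             measure_pmf.prob p {\<sigma>. \<forall>(u, \<gamma>)\<in>T. \<sigma> u = \<gamma>}
               \<le> (\<Prod>(u, \<gamma>)\<in>T. 1 / (lam * real (deg V E u))))))
     \<and>
     ((\<forall>v\<in>V. real (card (S v)) \<ge> (1 + lam) * real (maxdeg V E)) \<longrightarrow>
       (\<exists>p :: ('a \<Rightarrow> 'c) pmf. (\<forall>\<sigma>\<in>set_pmf p. S_coloring V E S \<sigma>) \<and>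
          (maxdeg V E > 0 \<longrightarrow>
            (\<forall>T :: ('a \<times> 'c) set.
               measure_pmf.prob p {\<sigma>. T \<subseteq> coloring_graph V \<sigma>}
                 \<le> (1 / (lam * real (maxdeg V E))) ^ card T))))"
  using random_list_coloring_deg[OF G lam_pos S_fin] random_list_coloring_spread[OF G lam_pos S_fin]
  unfolding pinned_def by (intro conjI impI) blast+

end
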